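(* Let $N\in\mathbb{C}^{m\times n}$ have rank $r$ and singular value decomposition $N=U\begin{pmatrix}\Sigma & 0\\ 0 & 0\end{pmatrix}V^{\ast}$, where $\Sigma\in\mathbb{C}^{r\times r}$ is diagonal with positive diagonal entries and $U\in\mathbb{C}^{m\times m}$, $V\in\mathbb{C}^{n\times n}$ are unitary. Let $Y\in\mathbb{C}^{n\times n}$ be arbitrary. Suppose that one of the following conditions holds: (C1') $YN^{\ast}N$ is normal; (C2') there exist $0\neq c_{1}'\in\mathbb{C}$ and $k_{1}'\in\mathbb{N}^{+}$ such that $(YN^{\ast}N)^{k_{1}'}=c_{1}'N^{\dagger}N$; (C3') there exist $0\neq c_{2}'\in\mathbb{C}$, $\ell'\in\mathbb{N}^{+}$ and $k_{2}'\in\mathbb{N}^{+}$ such that $(YN^{\ast}N)^{k_{2}'}=c_{2}'(N^{\ast}N)^{\ell'}$; (C4') $F_{N}Y$ is normal; (C5') there exist $0\neq c_{3}'\in\mathbb{C}$ and $k_{3}'\in\mathbb{N}^{+}$ such that $(F_{N}Y)^{k_{3}'}=c_{3}'F_{N}$; (C6') $F_{N}YN^{\dagger}N=0$; (C7') there exists $k_{4}'\in\mathbb{N}^{+}$ such that $F_{N}Y(N^{\ast}N)^{k_{4}'}=0$. Then $Y=V\begin{pmatrix}Y_{1} & Y_{3}\\ 0 & Y_{4}\end{pmatrix}V^{\ast}$ for some $Y_{1}\in\mathbb{C}^{r\times r}$, $Y_{3}\in\mathbb{C}^{r\times(n-r)}$, $Y_{4}\in\mathbb{C}^{(n-r)\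times(n-r)}$.
   Context: $\mathbb{N}^{+}$ is the set of positive integers. For a complex matrix $A$, $A^{\ast}$ is its conjugate transpose, $A^{\dagger}$ its Moore--Penrose inverse, and $F_{A}:=I-A^{\dagger}A$. A square matrix $B$ is normal if $BB^{\ast}=B^{\ast}B$. *)

theory Defs
  imports "Jordan_Normal_Form.Schur_Decomposition" "Jordan_Normal_Form.DL_Rank"
begin

definition unitary_mat :: "complex mat \<Rightarrow> nat \<Rightarrow> bool" where
  "unitary_mat U k \<longleftrightarrow> U \<in> carrier_mat k k \<and>
     mat_adjoint U * U = 1\<^sub>m k \<and> U * mat_adjoint U = 1\<^sub>m k"

definition normal_mat :: "complex mat \<Rightarrow> bool" where
  "normal_mat B \<longleftrightarrow> B * mat_adjoint B = mat_adjoint B * B"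

definition penrose :: "complex mat \<Rightarrow> complex mat \<Rightarrow> bool" where
  "penrose A X \<longleftrightarrow> X \<in> carrier_mat (dim_col A) (dim_row A) \<and>
     A * X * A = A \<and> X * A * X = X \<and>
     mat_adjoint (A * X) = A * X \<and> mat_adjoint (X * A) = X * A"

text \<open>The Moore--Penrose inverse (exists and is unique).\<close>
definition mp_inv :: "complex mat \<Rightarrow> complex mat" where
  "mp_inv A = (THE X. penrose A X)"

definition F_mat :: "complex mat \<Rightarrow> complex mat" where
  "F_mat A = 1\<^sub>m (dim_col A) - mp_inv A * A"

end

theory Submission
  imports Defs
begin

text \<open>Put \<open>P = mp_inv N * N\<close>, the orthogonal projector onto the range of
  \<open>Q = mat_adjoint N * N\<close>, and \<open>F = I - P\<close>. Each of the seven conditions forces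
  \<open>F Y P = 0\<close>, i.e. the range of P is Y-invariant: for the normality conditions because a
  normal matrix whose Gram matrix is annihilated by F (or P) vanishes, for the power conditions
  because \<open>Y Q\<close> (resp. \<open>F Y\<close>) commutes with its own power, which is a multiple of a
  matrix killed by F (resp. P). In the basis given by V, P is \<open>diag(I_r, 0)\<close>, so
  invariance of its range means that \<open>V^* Y V\<close> is block upper triangular.\<close>

lemma smult_mat_eq_zero_cancel:
  fixes A :: "'a :: field mat"
  assumes "c \<noteq> 0" and "A \<in> carrier_mat a b" and "c \<cdot>\<^sub>m A = 0\<^sub>m a b"
  shows "A = 0\<^sub>m a b"
proof (rule eq_matI)
  fix i j assume "i < dim_row (0\<^sub>m a b)" "j < dim_col (0\<^sub>m a b)"
  then show "A $$ (i, j) = 0\<^sub>m a b $$ (i, j)"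
    using assms(1,2) arg_cong[OF assms(3), of "\<lambda>M. M $$ (i, j)"] by simp
qed (use assms in simp_all)

lemma eq_if_minus_mat_eq_zero:
  fixes A :: "'a :: ab_group_add mat"
  assumes "A \<in> carrier_mat a b" and "B \<in> carrier_mat a b" and "A - B = 0\<^sub>m a b"
  shows "A = B"
proof (rule eq_matI)
  fix i j assume "i < dim_row B" "j < dim_col B"
  then show "A $$ (i, j) = B $$ (i, j)"
    using assms(1,2) arg_cong[OF assms(3), of "\<lambda>M. M $$ (i, j)"] by simp
qed (use assms in simp_all)

lemma mat_mult_pow_commute:
  assumes A: "A \<in> carrier_mat n n"
  shows "A * A ^\<^sub>m k = A ^\<^sub>m k * A"
proof (induction k)
  case (Suc k)
  have "A * A ^\<^sub>m Suc k = (A * A ^\<^sub>m k) * A"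
    using assoc_mult_mat[OF A pow_carrier_mat[OF A] A] by simp
  with Suc show ?case
    by simp
qed (use A in simp)

lemma dim_mat_adjoint [simp]:
  "dim_row (mat_adjoint A) = dim_col A" "dim_col (mat_adjoint A) = dim_row A"
  unfolding mat_adjoint_def by auto

lemma index_mat_adjoint [simp]:
  "i < dim_col A \<Longrightarrow> j < dim_row A \<Longrightarrow> mat_adjoint A $$ (i, j) = conjugate (A $$ (j, i))"
  unfolding mat_adjoint_def mat_of_rows_def by simp

lemma mat_adjoint_carrier_mat [simp]: "A \<in> carrier_mat a b \<Longrightarrow> mat_adjoint A \<in> carrier_mat b a"
  unfolding carrier_mat_def by simp

lemma mat_adjoint_mat_adjoint [simp]: "mat_adjoint (mat_adjoint A) = A"
  by (rule eq_matI) simp_all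

lemma mat_adjoint_zero [simp]: "mat_adjoint (0\<^sub>m a b) = 0\<^sub>m b a"
  by (rule eq_matI) simp_all

lemma mat_adjoint_one [simp]: "mat_adjoint (1\<^sub>m a :: complex mat) = 1\<^sub>m a"
  by (rule eq_matI) simp_all

lemma mat_adjoint_minus:
  "A \<in> carrier_mat a b \<Longrightarrow> B \<in> carrier_mat a b \<Longrightarrow> mat_adjoint (A - B) = mat_adjoint A - mat_adjoint B"
  by (rule eq_matI) (simp_all, metis diff_conv_add_uminus conjugate_dist_add conjugate_neg)

lemma mat_adjoint_mult:
  assumes "A \<in> carrier_mat a b" "B \<in> carrier_mat b c"
  shows "mat_adjoint (A * B) = mat_adjoint B * mat_adjoint A"
proof (rule eq_matI)
  fix i j assume "i < dim_row (mat_adjoint B * mat_adjoint A)" "j < dim_col (mat_adjoint B * mat_adjoint A)"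
  with assms show "mat_adjoint (A * B) $$ (i, j) = (mat_adjoint B * mat_adjoint A) $$ (i, j)"
    by (simp add: scalar_prod_def sum_conjugate conjugate_dist_mul mult.commute)
qed (use assms in auto)

lemma mat_adjoint_four_block_mat:
  assumes "A \<in> carrier_mat a1 b1" "B \<in> carrier_mat a1 b2" "C \<in> carrier_mat a2 b1" "D \<in> carrier_mat a2 b2"
  shows "mat_adjoint (four_block_mat A B C D)
    = four_block_mat (mat_adjoint A) (mat_adjoint C) (mat_adjoint B) (mat_adjoint D)"
  by (rule eq_matI) (use assms in auto)

lemma eq_zero_if_mult_mat_adjoint_self:
  fixes X :: "'a :: conjugatable_ordered_field mat"
  assumes X: "X \<in> carrier_mat a b" and XX: "X * mat_adjoint X = 0\<^sub>m a a"
  shows "X = 0\<^sub>m a b"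
proof (rule eq_matI)
  fix i j assume "i < dim_row (0\<^sub>m a b)" "j < dim_col (0\<^sub>m a b)"
  hence i: "i < a" and j: "j < b" by simp_all
  have "col (mat_adjoint X) i = conjugate (row X i)"
    using X i by (intro eq_vecI) simp_all
  hence "row X i \<bullet>c row X i = (X * mat_adjoint X) $$ (i, i)"
    using X i by simp
  hence "row X i \<bullet>c row X i = 0"
    using XX i by simp
  hence "row X i = 0\<^sub>v b"
    using X by (subst (asm) conjugate_square_eq_0_vec) auto
  hence "row X i $ j = 0"
    using j by simp
  thus "X $$ (i, j) = 0\<^sub>m a b $$ (i, j)"
    using X i j by simp
qed (use X in simp_all)

lemma eq_zero_if_mat_adjoint_mult_self:
  fixes X :: "'a :: conjugatable_ordered_field mat"
  assumes "X \<in> carrier_mat a b" and "mat_adjoint X * X = 0\<^sub>m b b"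
  shows "X = 0\<^sub>m a b"
  using eq_zero_if_mult_mat_adjoint_self[of "mat_adjoint X" b a] assms
    mat_adjoint_mat_adjoint[of X] mat_adjoint_zero[of b a] by simp

lemma unitary_conj_mult:
  fixes W :: "complex mat"
  assumes L: "L \<in> carrier_mat p a" and A: "A \<in> carrier_mat a b" and W: "W \<in> carrier_mat b b"
    and B: "B \<in> carrier_mat b d" and R: "R \<in> carrier_mat q d" and WW: "mat_adjoint W * W = 1\<^sub>m b"
  shows "(L * A * mat_adjoint W) * (W * B * mat_adjoint R) = L * (A * B) * mat_adjoint R"
proof -
  have W': "mat_adjoint W \<in> carrier_mat b b" and R': "mat_adjoint R \<in> carrier_mat d q"
    using W R by simp_all
  have LA: "L * A \<in> carrier_mat p b" and BR: "B * mat_adjoint R \<in> carrier_mat b q"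
    using L A B R' by simp_all
  have "(L * A * mat_adjoint W) * (W * B * mat_adjoint R)
      = (L * A) * (mat_adjoint W * (W * (B * mat_adjoint R)))"
    using assoc_mult_mat[OF W B R'] assoc_mult_mat[OF LA W' mult_carrier_mat[OF W BR]] by simp
  also have "mat_adjoint W * (W * (B * mat_adjoint R)) = B * mat_adjoint R"
    using assoc_mult_mat[OF W' W BR] WW left_mult_one_mat[OF BR] by simp
  also have "(L * A) * (B * mat_adjoint R) = L * (A * B) * mat_adjoint R"
    using assoc_mult_mat[OF L A B] assoc_mult_mat[OF LA B R'] by simp
  finally show ?thesis .
qed

lemma mat_adjoint_conj:
  assumes L: "L \<in> carrier_mat p a" and A: "A \<in> carrier_mat a b" and R: "R \<in> carrier_mat q b"
  shows "mat_adjoint (L * A * mat_adjoint R) = R * mat_adjoint A * mat_adjoint L"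
  using assms by (simp add: mat_adjoint_mult[of _ p b _ q] mat_adjoint_mult[of _ p a _ b]
      assoc_mult_mat[of _ q b _ a _ p])

lemma unitary_unconj:
  fixes V :: "complex mat"
  assumes V: "V \<in> carrier_mat n n" and VV: "mat_adjoint V * V = 1\<^sub>m n" and Z: "Z \<in> carrier_mat n n"
  shows "mat_adjoint V * (V * Z * mat_adjoint V) * V = Z"
proof -
  have V': "mat_adjoint V \<in> carrier_mat n n"
    using V by simp
  have "mat_adjoint V * (V * Z * mat_adjoint V) = (mat_adjoint V * V) * Z * mat_adjoint V"
    using assoc_mult_mat[OF V' mult_carrier_mat[OF V Z] V'] assoc_mult_mat[OF V' V Z] by simp
  also have "\<dots> = Z * mat_adjoint V"
    using VV Z by simp
  finally show ?thesis
    using assoc_mult_mat[OF Z V' V] VV Z by simp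
qed

definition pad_mat :: "'a :: zero mat \<Rightarrow> nat \<Rightarrow> nat \<Rightarrow> 'a mat" where
  "pad_mat A t s = four_block_mat A (0\<^sub>m (dim_row A) s) (0\<^sub>m t (dim_col A)) (0\<^sub>m t s)"

lemma pad_mat_carrier [simp]: "A \<in> carrier_mat a b \<Longrightarrow> pad_mat A t s \<in> carrier_mat (a + t) (b + s)"
  unfolding pad_mat_def by auto

lemma pad_mat_mult:
  fixes A :: "'a :: semiring_0 mat"
  assumes "A \<in> carrier_mat a b" "B \<in> carrier_mat b c"
  shows "pad_mat A t s * pad_mat B s u = pad_mat (A * B) t u"
  unfolding pad_mat_def using assms
  by (subst mult_four_block_mat[of _ a b _ s _ t _ _ c _ u]) auto

lemma mat_adjoint_pad_mat:
  "A \<in> carrier_mat a b \<Longrightarrow> mat_adjoint (pad_mat A t s) = pad_mat (mat_adjoint A) s t"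
  unfolding pad_mat_def by (subst mat_adjoint_four_block_mat[of _ a b _ s _ t]) auto

lemma four_block_upper_triangular_if_invariant:
  fixes W :: "'a :: semiring_1 mat" and r s :: nat
  defines "P \<equiv> pad_mat (1\<^sub>m r) s s"
  assumes W: "W \<in> carrier_mat (r + s) (r + s)" and inv: "W * P = P * (W * P)"
  shows "\<exists>A B E. A \<in> carrier_mat r r \<and> B \<in> carrier_mat r s \<and> E \<in> carrier_mat s s
    \<and> W = four_block_mat A B (0\<^sub>m s r) E"
proof -
  obtain A B C E where split: "split_block W r r = (A, B, C, E)"
    by (cases "split_block W r r") auto
  have A: "A \<in> carrier_mat r r" and B: "B \<in> carrier_mat r s" and C: "C \<in> carrier_mat s r"
    and E: "E \<in> carrier_mat s s" and W_blocks: "W = four_block_mat A B C E"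
    using split_block[OF split, of s s] W by auto
  have WP: "W * P = four_block_mat A (0\<^sub>m r s) C (0\<^sub>m s s)"
    unfolding W_blocks P_def pad_mat_def using A B C E
    by (subst mult_four_block_mat[of _ r r _ s _ s _ _ r _ s]) auto
  have "P * (W * P) = four_block_mat A (0\<^sub>m r s) (0\<^sub>m s r) (0\<^sub>m s s)"
    unfolding WP unfolding P_def pad_mat_def using A C
    by (subst mult_four_block_mat[of _ r r _ s _ s _ _ r _ s]) auto
  hence "C $$ (i, j) = 0" if "i < s" "j < r" for i j
    using arg_cong[OF inv, of "\<lambda>M. M $$ (r + i, j)"] that A C unfolding WP by simp
  hence "C = 0\<^sub>m s r"
    using C by (intro eq_matI) auto
  thus ?thesis
    using A B E W_blocks by blast
qed

section \<open>The Moore--Penrose inverse\<close>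

lemma penrose_unique:
  assumes pX: "penrose A X" and pY: "penrose A Y"
  shows "X = Y"
proof -
  define a b where "a = dim_row A" and "b = dim_col A"
  have A: "A \<in> carrier_mat a b" and X: "X \<in> carrier_mat b a" and Y: "Y \<in> carrier_mat b a"
    using pX pY unfolding penrose_def a_def b_def by auto
  have A': "mat_adjoint A \<in> carrier_mat b a" and X': "mat_adjoint X \<in> carrier_mat a b"
    and Y': "mat_adjoint Y \<in> carrier_mat a b"
    using A X Y by simp_all
  have XX': "X * mat_adjoint X \<in> carrier_mat b b" and Y'Y: "mat_adjoint Y * Y \<in> carrier_mat a a"
    and AY: "A * Y \<in> carrier_mat a a" and XA: "X * A \<in> carrier_mat b b"
    using A X Y X' Y' by (auto intro: mult_carrier_mat)
  have AXA: "A * X * A = A" and XAX: "X * A * X = X" and AX_herm: "mat_adjoint (A * X) = A * X"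
    and XA_herm: "mat_adjoint (X * A) = X * A"
    using pX unfolding penrose_def by auto
  have AYA: "A * Y * A = A" and YAY: "Y * A * Y = Y" and AY_herm: "mat_adjoint (A * Y) = A * Y"
    and YA_herm: "mat_adjoint (Y * A) = Y * A"
    using pY unfolding penrose_def by auto
  have "X = X * mat_adjoint X * mat_adjoint A"
    using XAX AX_herm assoc_mult_mat[OF X A X] mat_adjoint_mult[OF A X] assoc_mult_mat[OF X X' A']
    by simp
  moreover have "mat_adjoint A = mat_adjoint A * (A * Y)"
    using AYA AY_herm mat_adjoint_mult[OF AY A] by simp
  ultimately have "X = X * mat_adjoint X * mat_adjoint A * (A * Y)"
    using assoc_mult_mat[OF XX' A' AY] by metis
  hence X_eq: "X = X * A * Y"
    using \<open>X = X * mat_adjoint X * mat_adjoint A\<close> assoc_mult_mat[OF X A Y] by metis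
  have "Y = mat_adjoint A * (mat_adjoint Y * Y)"
    using YAY YA_herm mat_adjoint_mult[OF Y A] assoc_mult_mat[OF A' Y' Y] by simp
  moreover have "mat_adjoint A = X * A * mat_adjoint A"
    using AXA XA_herm mat_adjoint_mult[OF A XA] assoc_mult_mat[OF A X A] by simp
  ultimately have "Y = X * A * (mat_adjoint A * (mat_adjoint Y * Y))"
    using assoc_mult_mat[OF XA A' Y'Y] by metis
  hence "Y = X * A * Y"
    using \<open>Y = mat_adjoint A * (mat_adjoint Y * Y)\<close> by metis
  with X_eq show ?thesis
    by simp
qed

lemma mp_inv_eqI: "penrose A X \<Longrightarrow> mp_inv A = X"
  unfolding mp_inv_def using penrose_unique by blast

section \<open>Projectors onto the range of a matrix\<close>

text \<open>P is the orthogonal projector onto the range of Q: \<open>P * Q = Q\<close> and \<open>Q * G = P\<close> give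
  the two inclusions of ranges.\<close>

locale range_projector =
  fixes n :: nat and P Q G :: "complex mat"
  assumes P_carrier: "P \<in> carrier_mat n n" and Q_carrier: "Q \<in> carrier_mat n n"
    and G_carrier: "G \<in> carrier_mat n n"
    and P_idem: "P * P = P" and P_herm: "mat_adjoint P = P"
    and P_Q: "P * Q = Q" and Q_P: "Q * P = Q" and Q_G: "Q * G = P"
begin

text \<open>Stating dimensions as \<open>sq_mat\<close> lets the simplifier discharge the carrier side
  conditions of associativity and of the projector identities.\<close>

definition sq_mat :: "complex mat \<Rightarrow> bool" where "sq_mat A \<longleftrightarrow> A \<in> carrier_mat n n"

definition F :: "complex mat" where "F = 1\<^sub>m n - P"

lemma sq_mat_basic [simp]: "sq_mat P" "sq_mat Q" "sq_mat G" "sq_mat F" "sq_mat (1\<^sub>m n)"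
  using P_carrier Q_carrier G_carrier unfolding sq_mat_def F_def by auto

lemma sq_mat_closed [simp]:
  "sq_mat A \<Longrightarrow> sq_mat B \<Longrightarrow> sq_mat (A * B)" "sq_mat A \<Longrightarrow> sq_mat B \<Longrightarrow> sq_mat (A - B)"
  "sq_mat A \<Longrightarrow> sq_mat (mat_adjoint A)" "sq_mat A \<Longrightarrow> sq_mat (c \<cdot>\<^sub>m A)"
  "sq_mat A \<Longrightarrow> sq_mat (A ^\<^sub>m k)"
  unfolding sq_mat_def by auto

lemma sq_mat_simps [simp]:
  "sq_mat A \<Longrightarrow> sq_mat B \<Longrightarrow> sq_mat C \<Longrightarrow> A * B * C = A * (B * C)"
  "sq_mat A \<Longrightarrow> A * 0\<^sub>m n n = 0\<^sub>m n n" "sq_mat A \<Longrightarrow> 0\<^sub>m n n * A = 0\<^sub>m n n"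
  "sq_mat A \<Longrightarrow> A * 1\<^sub>m n = A" "sq_mat A \<Longrightarrow> 1\<^sub>m n * A = A"
  "sq_mat A \<Longrightarrow> sq_mat B \<Longrightarrow> A * (c \<cdot>\<^sub>m B) = c \<cdot>\<^sub>m (A * B)"
  "sq_mat A \<Longrightarrow> sq_mat B \<Longrightarrow> (c \<cdot>\<^sub>m A) * B = c \<cdot>\<^sub>m (A * B)"
  unfolding sq_mat_def by (auto intro: assoc_mult_mat mult_smult_distrib mult_smult_assoc_mat)

lemma mult_assoc_eq: "A * B = C \<Longrightarrow> sq_mat A \<Longrightarrow> sq_mat B \<Longrightarrow> sq_mat Z \<Longrightarrow> A * (B * Z) = C * Z"
  by (metis sq_mat_simps(1))

lemma F_P [simp]: "F * P = 0\<^sub>m n n" and P_F [simp]: "P * F = 0\<^sub>m n n"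
  and F_Q [simp]: "F * Q = 0\<^sub>m n n" and Q_F [simp]: "Q * F = 0\<^sub>m n n"
  using minus_mult_distrib_mat[OF one_carrier_mat P_carrier P_carrier]
    mult_minus_distrib_mat[OF P_carrier one_carrier_mat P_carrier]
    minus_mult_distrib_mat[OF one_carrier_mat P_carrier Q_carrier]
    mult_minus_distrib_mat[OF Q_carrier one_carrier_mat P_carrier]
    P_carrier Q_carrier P_idem P_Q Q_P
  unfolding F_def by simp_all

lemma F_idem: "F * F = F"
proof -
  have F: "F \<in> carrier_mat n n"
    using sq_mat_basic(4) unfolding sq_mat_def .
  have "F * F = F - 0\<^sub>m n n"
    using minus_mult_distrib_mat[OF one_carrier_mat P_carrier F] F by (simp add: F_def[symmetric])
  also have "\<dots> = F"
    using F by (intro eq_matI) auto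
  finally show ?thesis .
qed

lemma F_herm: "mat_adjoint F = F"
  unfolding F_def using mat_adjoint_minus[OF one_carrier_mat P_carrier] P_herm by simp

lemmas projector_simps [simp] = P_idem P_Q Q_P F_idem mult_assoc_eq[OF F_idem]
  mult_assoc_eq[OF P_idem] mult_assoc_eq[OF P_Q] mult_assoc_eq[OF Q_P]
  mult_assoc_eq[OF F_P] mult_assoc_eq[OF P_F] mult_assoc_eq[OF F_Q] mult_assoc_eq[OF Q_F]

lemma Q_power_right_inverse:
  assumes "k > 0"
  shows "\<exists>H. sq_mat H \<and> Q ^\<^sub>m k * H = P"
  using assms
proof (induction k)
  case (Suc k)
  show ?case
  proof (cases k)
    case 0
    then show ?thesis
      using Q_G by (intro exI[of _ G]) simp
  next
    case (Suc j)
    then obtain H where H: "sq_mat H" "Q ^\<^sub>m k * H = P"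
      using Suc.IH by auto
    have "Q ^\<^sub>m Suc k * (G * H) = Q ^\<^sub>m k * P * H"
      using H by (simp add: mult_assoc_eq[OF Q_G])
    also have "Q ^\<^sub>m k * P = Q ^\<^sub>m k"
      using \<open>k = Suc j\<close> by simp
    finally have "Q ^\<^sub>m Suc k * (G * H) = P"
      using H by simp
    with H show ?thesis
      by (intro exI[of _ "G * H"]) simp
  qed
qed simp

lemma F_Q_power [simp]:
  assumes "k > 0"
  shows "F * Q ^\<^sub>m k = 0\<^sub>m n n"
proof -
  obtain j where k: "k = Suc j"
    using assms by (cases k) auto
  have "F * Q ^\<^sub>m k = F * (Q * Q ^\<^sub>m j)"
    unfolding k using mat_mult_pow_commute[OF Q_carrier, of j] by simp
  then show ?thesis
    by simp
qed

lemma FYP_zero_if_FYQ_zero: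
  assumes Y: "sq_mat Y" and FYQ: "F * Y * Q = 0\<^sub>m n n"
  shows "F * Y * P = 0\<^sub>m n n"
proof -
  have "F * Y * P = F * Y * Q * G"
    using Y Q_G by simp
  with FYQ Y show ?thesis
    by simp
qed

lemma FYP_zero_if_FYQ_power_zero:
  assumes Y: "sq_mat Y" and k: "k > 0" and FYQ: "F * Y * Q ^\<^sub>m k = 0\<^sub>m n n"
  shows "F * Y * P = 0\<^sub>m n n"
proof -
  obtain H where H: "sq_mat H" "Q ^\<^sub>m k * H = P"
    using Q_power_right_inverse[OF k] by auto
  have "F * Y * P = F * Y * Q ^\<^sub>m k * H"
    using Y H by simp
  with FYQ H show ?thesis
    by simp
qed

lemma F_Q_power_mult [simp]: "k > 0 \<Longrightarrow> sq_mat Z \<Longrightarrow> F * (Q ^\<^sub>m k * Z) = 0\<^sub>m n n"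
  using mult_assoc_eq[OF F_Q_power] by simp

text \<open>For normal M the Gram matrix of F M is \<open>F M^* M F\<close>, which vanishes as soon as
  \<open>M F = 0\<close>; dually for \<open>(M P)^* (M P)\<close> when \<open>P M = 0\<close>.\<close>

lemma FYP_zero_if_normal_YQ:
  assumes Y: "sq_mat Y" and normal: "normal_mat (Y * Q)"
  shows "F * Y * P = 0\<^sub>m n n"
proof -
  define M where "M = Y * Q"
  have M: "sq_mat M" and MF: "M * F = 0\<^sub>m n n"
    unfolding M_def using Y by simp_all
  have "F * M * mat_adjoint (F * M) = F * (M * mat_adjoint M) * F"
    using mat_adjoint_mult[of F n n M n] F_herm M by (simp add: sq_mat_def[symmetric])
  also have "\<dots> = F * (mat_adjoint M * (M * F))"
    using normal M unfolding normal_mat_def M_def[symmetric] by simp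
  finally have "F * M = 0\<^sub>m n n"
    using eq_zero_if_mult_mat_adjoint_self[of "F * M" n n, folded sq_mat_def] M MF by simp
  with Y show ?thesis
    unfolding M_def by (intro FYP_zero_if_FYQ_zero) simp_all
qed

lemma FYP_zero_if_normal_FY:
  assumes Y: "sq_mat Y" and normal: "normal_mat (F * Y)"
  shows "F * Y * P = 0\<^sub>m n n"
proof -
  define M where "M = F * Y"
  have M: "sq_mat M" and PM: "P * M = 0\<^sub>m n n"
    unfolding M_def using Y by simp_all
  have "mat_adjoint (M * P) * (M * P) = P * (mat_adjoint M * M) * P"
    using mat_adjoint_mult[of M n n P n] P_herm M by (simp add: sq_mat_def[symmetric])
  also have "\<dots> = P * (M * mat_adjoint M) * P"
    using normal unfolding normal_mat_def M_def[symmetric] by (simp only:)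
  finally have "M * P = 0\<^sub>m n n"
    using eq_zero_if_mat_adjoint_mult_self[of "M * P" n n, folded sq_mat_def] M PM
      mult_assoc_eq[OF PM] by simp
  then show ?thesis
    unfolding M_def using Y by simp
qed

lemma FYP_zero_if_YQ_power_eq_P:
  assumes Y: "sq_mat Y" and c: "c \<noteq> 0" and power: "(Y * Q) ^\<^sub>m k = c \<cdot>\<^sub>m P"
  shows "F * Y * P = 0\<^sub>m n n"
proof -
  define M where "M = Y * Q"
  have M: "sq_mat M" and MP: "M * P = M" and power_M: "M ^\<^sub>m k = c \<cdot>\<^sub>m P"
    unfolding M_def using Y power by simp_all
  have "c \<cdot>\<^sub>m (F * M) = F * (M * M ^\<^sub>m k)"
    using M MP by (simp add: power_M)
  also have "\<dots> = F * (M ^\<^sub>m k * M)"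
    using mat_mult_pow_commute[of M n k] M unfolding sq_mat_def by simp
  also have "\<dots> = 0\<^sub>m n n"
    using M by (simp add: power_M)
  finally have "F * M = 0\<^sub>m n n"
    using smult_mat_eq_zero_cancel[OF c, of "F * M" n n, folded sq_mat_def] M by simp
  with Y show ?thesis
    unfolding M_def by (intro FYP_zero_if_FYQ_zero) simp_all
qed

lemma FYP_zero_if_YQ_power_eq_Q_power:
  assumes Y: "sq_mat Y" and c: "c \<noteq> 0" and l: "l > 0"
    and power: "(Y * Q) ^\<^sub>m k = c \<cdot>\<^sub>m Q ^\<^sub>m l"
  shows "F * Y * P = 0\<^sub>m n n"
proof -
  define M where "M = Y * Q"
  have M: "sq_mat M" and MP: "M * P = M" and power_M: "M ^\<^sub>m k = c \<cdot>\<^sub>m Q ^\<^sub>m l"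
    unfolding M_def using Y power by simp_all
  obtain H where H: "sq_mat H" "Q ^\<^sub>m l * H = P"
    using Q_power_right_inverse[OF l] by auto
  have "c \<cdot>\<^sub>m (F * M) = c \<cdot>\<^sub>m (F * (M * (Q ^\<^sub>m l * H)))"
    using H(2) MP by simp
  also have "\<dots> = F * (M * M ^\<^sub>m k) * H"
    using M H by (simp add: power_M)
  also have "\<dots> = F * (M ^\<^sub>m k * M) * H"
    using mat_mult_pow_commute[of M n k] M unfolding sq_mat_def by simp
  also have "\<dots> = 0\<^sub>m n n"
    using M H l by (simp add: power_M)
  finally have "F * M = 0\<^sub>m n n"
    using smult_mat_eq_zero_cancel[OF c, of "F * M" n n, folded sq_mat_def] M by simp
  with Y show ?thesis
    unfolding M_def by (intro FYP_zero_if_FYQ_zero) simp_all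
qed

lemma FYP_zero_if_FY_power_eq_F:
  assumes Y: "sq_mat Y" and c: "c \<noteq> 0" and power: "(F * Y) ^\<^sub>m k = c \<cdot>\<^sub>m F"
  shows "F * Y * P = 0\<^sub>m n n"
proof -
  define M where "M = F * Y"
  have M: "sq_mat M" and FM: "F * M = M" and power_M: "M ^\<^sub>m k = c \<cdot>\<^sub>m F"
    unfolding M_def using Y power by simp_all
  have "c \<cdot>\<^sub>m (M * P) = M ^\<^sub>m k * M * P"
    using M mult_assoc_eq[OF FM] by (simp add: power_M)
  also have "\<dots> = M * M ^\<^sub>m k * P"
    using mat_mult_pow_commute[of M n k] M unfolding sq_mat_def by simp
  also have "\<dots> = 0\<^sub>m n n"
    using M by (simp add: power_M)
  finally have "M * P = 0\<^sub>m n n"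
    using smult_mat_eq_zero_cancel[OF c, of "M * P" n n, folded sq_mat_def] M by simp
  then show ?thesis
    unfolding M_def using Y by simp
qed

lemma FYP_zero_if_condition:
  assumes "sq_mat Y"
    and "normal_mat (Y * Q)
      \<or> (\<exists>c k. c \<noteq> 0 \<and> k > 0 \<and> (Y * Q) ^\<^sub>m k = c \<cdot>\<^sub>m P)
      \<or> (\<exists>c l k. c \<noteq> 0 \<and> l > 0 \<and> k > 0 \<and> (Y * Q) ^\<^sub>m k = c \<cdot>\<^sub>m Q ^\<^sub>m l)
      \<or> normal_mat (F * Y)
      \<or> (\<exists>c k. c \<noteq> 0 \<and> k > 0 \<and> (F * Y) ^\<^sub>m k = c \<cdot>\<^sub>m F)
      \<or> F * Y * P = 0\<^sub>m n n
      \<or> (\<exists>k>0. F * Y * Q ^\<^sub>m k = 0\<^sub>m n n)"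
  shows "F * Y * P = 0\<^sub>m n n"
  using assms FYP_zero_if_normal_YQ FYP_zero_if_YQ_power_eq_P FYP_zero_if_YQ_power_eq_Q_power
    FYP_zero_if_normal_FY FYP_zero_if_FY_power_eq_F FYP_zero_if_FYQ_power_zero by blast

lemma range_invariant_if_FYP_zero:
  assumes Y: "sq_mat Y" and FYP: "F * Y * P = 0\<^sub>m n n"
  shows "Y * P = P * (Y * P)"
proof -
  have YP: "Y * P \<in> carrier_mat n n" and PYP: "P * (Y * P) \<in> carrier_mat n n"
    using Y unfolding sq_mat_def[symmetric] by simp_all
  have "Y * P - P * (Y * P) = F * Y * P"
    using minus_mult_distrib_mat[OF one_carrier_mat P_carrier YP] YP Y unfolding F_def by simp
  with FYP show ?thesis
    using eq_if_minus_mat_eq_zero[OF YP PYP] by simp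
qed

end

section \<open>Singular value decomposition\<close>

lemma (in vec_space) rank_le_nr:
  assumes "A \<in> carrier_mat n nc"
  shows "rank A \<le> n"
proof -
  have "set (cols A) \<subseteq> carrier_vec n"
    using cols_dim[of A] assms by simp
  then have "rank A \<le> dim"
    unfolding rank_def using subspace_dim[OF span_is_subspace fin_dim fin_dim_span_cols[OF assms]] by simp
  then show ?thesis
    using dim_is_n by simp
qed

lemma diagonal_mat_invertible:
  fixes A :: "'a :: field mat"
  assumes A: "A \<in> carrier_mat r r" and diag: "diagonal_mat A" and nonzero: "\<forall>i<r. A $$ (i, i) \<noteq> 0"
  shows "\<exists>B. B \<in> carrier_mat r r \<and> A * B = 1\<^sub>m r \<and> B * A = 1\<^sub>m r"
proof -
  define d where "d i = (if i < r then A $$ (i, i) else 1)" for i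
  have d: "d i \<noteq> 0" for i
    using nonzero unfolding d_def by auto
  have "A = mat_diag r d"
    using A diag unfolding diagonal_mat_def mat_diag_def d_def by (intro eq_matI) auto
  with d show ?thesis
    by (intro exI[of _ "mat_diag r (\<lambda>i. 1 / d i)"]) simp
qed

locale svd_decomposition =
  fixes N U V Sigma Sigma_inv :: "complex mat" and r s t :: nat
  assumes U_unitary: "unitary_mat U (r + t)" and V_unitary: "unitary_mat V (r + s)"
    and Sigma_carrier: "Sigma \<in> carrier_mat r r" and Sigma_inv_carrier: "Sigma_inv \<in> carrier_mat r r"
    and Sigma_inv_left: "Sigma_inv * Sigma = 1\<^sub>m r" and Sigma_inv_right: "Sigma * Sigma_inv = 1\<^sub>m r"
    and N_svd: "N = U * pad_mat Sigma t s * mat_adjoint V"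
begin

lemma U_carrier: "U \<in> carrier_mat (r + t) (r + t)" and U_adjoint_U: "mat_adjoint U * U = 1\<^sub>m (r + t)"
  and V_carrier: "V \<in> carrier_mat (r + s) (r + s)" and V_adjoint_V: "mat_adjoint V * V = 1\<^sub>m (r + s)"
  and V_V_adjoint: "V * mat_adjoint V = 1\<^sub>m (r + s)"
  using U_unitary V_unitary unfolding unitary_mat_def by auto

lemma N_carrier: "N \<in> carrier_mat (r + t) (r + s)"
  unfolding N_svd using U_carrier V_carrier Sigma_carrier by (auto intro!: mult_carrier_mat)

definition pinv :: "complex mat" where
  "pinv = V * pad_mat Sigma_inv s t * mat_adjoint U"

lemmas carriers = U_carrier V_carrier pad_mat_carrier[OF Sigma_carrier, of t s]
  pad_mat_carrier[OF Sigma_inv_carrier, of s t]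
  pad_mat_carrier[OF one_carrier_mat[of r], of t t] pad_mat_carrier[OF one_carrier_mat[of r], of s s]

lemma pinv_carrier: "pinv \<in> carrier_mat (r + s) (r + t)"
  unfolding pinv_def using carriers by (auto intro!: mult_carrier_mat)

lemma N_mult_pinv: "N * pinv = U * pad_mat (1\<^sub>m r) t t * mat_adjoint U"
  unfolding N_svd pinv_def using unitary_conj_mult[OF carriers(1,3,2,4,1) V_adjoint_V]
  by (simp add: pad_mat_mult[OF Sigma_carrier Sigma_inv_carrier] Sigma_inv_right)

lemma pinv_mult_N: "pinv * N = V * pad_mat (1\<^sub>m r) s s * mat_adjoint V"
  unfolding N_svd pinv_def using unitary_conj_mult[OF carriers(2,4,1,3,2) U_adjoint_U]
  by (simp add: pad_mat_mult[OF Sigma_inv_carrier Sigma_carrier] Sigma_inv_left)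

lemma mp_inv_N: "mp_inv N = pinv"
proof (rule mp_inv_eqI)
  show "penrose N pinv"
    unfolding penrose_def
  proof (intro conjI)
    show "pinv \<in> carrier_mat (dim_col N) (dim_row N)"
      using N_carrier pinv_carrier by simp
    show "N * pinv * N = N"
      unfolding N_mult_pinv unfolding N_svd using unitary_conj_mult[OF carriers(1,5,1,3,2) U_adjoint_U]
      by (simp add: pad_mat_mult[OF one_carrier_mat Sigma_carrier] left_mult_one_mat[OF Sigma_carrier])
    show "pinv * N * pinv = pinv"
      unfolding pinv_mult_N unfolding pinv_def using unitary_conj_mult[OF carriers(2,6,2,4,1) V_adjoint_V]
      by (simp add: pad_mat_mult[OF one_carrier_mat Sigma_inv_carrier]
          left_mult_one_mat[OF Sigma_inv_carrier])
    show "mat_adjoint (N * pinv) = N * pinv"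
      unfolding N_mult_pinv using mat_adjoint_conj[OF carriers(1,5,1)]
      by (simp add: mat_adjoint_pad_mat[OF one_carrier_mat])
    show "mat_adjoint (pinv * N) = pinv * N"
      unfolding pinv_mult_N using mat_adjoint_conj[OF carriers(2,6,2)]
      by (simp add: mat_adjoint_pad_mat[OF one_carrier_mat])
  qed
qed

lemma adjoint_N_mult_N: "mat_adjoint N * N = V * pad_mat (mat_adjoint Sigma * Sigma) s s * mat_adjoint V"
proof -
  have "mat_adjoint N = V * pad_mat (mat_adjoint Sigma) s t * mat_adjoint U"
    unfolding N_svd using mat_adjoint_conj[OF carriers(1,3,2)] mat_adjoint_pad_mat[OF Sigma_carrier]
    by simp
  then show ?thesis
    unfolding N_svd using unitary_conj_mult[OF carriers(2) _ carriers(1,3,2) U_adjoint_U, of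
        "pad_mat (mat_adjoint Sigma) s t"] Sigma_carrier
    by (simp add: pad_mat_mult[of _ r r])
qed

lemma range_projector_N:
  "range_projector (r + s) (mp_inv N * N) (mat_adjoint N * N)
    (V * pad_mat (Sigma_inv * mat_adjoint Sigma_inv) s s * mat_adjoint V)"
proof -
  define conj where "conj A = V * pad_mat A s s * mat_adjoint V" for A
  have conj_carrier: "conj A \<in> carrier_mat (r + s) (r + s)" if "A \<in> carrier_mat r r" for A
    unfolding conj_def using that V_carrier by (auto intro!: mult_carrier_mat)
  have conj_mult: "conj A * conj B = conj (A * B)"
    if "A \<in> carrier_mat r r" "B \<in> carrier_mat r r" for A B
    unfolding conj_def using that unitary_conj_mult[OF V_carrier _ V_carrier _ V_carrier V_adjoint_V]
    by (simp add: pad_mat_mult)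
  have conj_herm: "mat_adjoint (conj A) = conj A" if "A \<in> carrier_mat r r" "mat_adjoint A = A" for A
    unfolding conj_def using that mat_adjoint_conj[OF V_carrier _ V_carrier]
      mat_adjoint_pad_mat[OF that(1), of s s] by simp
  have S: "mat_adjoint Sigma * Sigma \<in> carrier_mat r r"
    and S_inv: "Sigma_inv * mat_adjoint Sigma_inv \<in> carrier_mat r r"
    using Sigma_carrier Sigma_inv_carrier by (auto intro!: mult_carrier_mat)
  have "mat_adjoint Sigma * Sigma * (Sigma_inv * mat_adjoint Sigma_inv)
      = mat_adjoint Sigma * ((Sigma * Sigma_inv) * mat_adjoint Sigma_inv)"
    using Sigma_carrier Sigma_inv_carrier
    by (simp add: assoc_mult_mat[of _ r r _ r _ r])
  also have "\<dots> = mat_adjoint (Sigma_inv * Sigma)"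
    using Sigma_inv_right mat_adjoint_mult[OF Sigma_inv_carrier Sigma_carrier] Sigma_inv_carrier by simp
  finally have S_S_inv: "mat_adjoint Sigma * Sigma * (Sigma_inv * mat_adjoint Sigma_inv) = 1\<^sub>m r"
    using Sigma_inv_left by simp
  show ?thesis
    unfolding mp_inv_N pinv_mult_N adjoint_N_mult_N conj_def[symmetric]
    by unfold_locales (use S S_inv S_S_inv in \<open>simp_all add: conj_carrier conj_mult conj_herm
          left_mult_one_mat[OF S] right_mult_one_mat[OF S]\<close>)
qed

lemma block_upper_triangular_if_invariant:
  assumes Y: "Y \<in> carrier_mat (r + s) (r + s)"
    and invariant: "Y * (mp_inv N * N) = mp_inv N * N * (Y * (mp_inv N * N))"
  shows "\<exists>Y1 Y3 Y4. Y1 \<in> carrier_mat r r \<and> Y3 \<in> carrier_mat r s \<and> Y4 \<in> carrier_mat s s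
    \<and> Y = V * four_block_mat Y1 Y3 (0\<^sub>m s r) Y4 * mat_adjoint V"
proof -
  define W where "W = mat_adjoint V * Y * V"
  define P where "P = pad_mat (1\<^sub>m r :: complex mat) s s"
  have V': "mat_adjoint V \<in> carrier_mat (r + s) (r + s)"
    using V_carrier by simp
  have W: "W \<in> carrier_mat (r + s) (r + s)" and P: "P \<in> carrier_mat (r + s) (r + s)"
    unfolding W_def P_def using V_carrier Y by (auto intro!: mult_carrier_mat)
  have WP: "W * P \<in> carrier_mat (r + s) (r + s)"
    using W P by (rule mult_carrier_mat)
  have Y_W: "Y = V * W * mat_adjoint V"
    unfolding W_def using unitary_unconj[OF V' _ Y] V_V_adjoint by simp
  have "V * (W * P) * mat_adjoint V = V * (P * (W * P)) * mat_adjoint V"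
    using invariant unitary_conj_mult[OF V_carrier W V_carrier P V_carrier V_adjoint_V]
      unitary_conj_mult[OF V_carrier P V_carrier WP V_carrier V_adjoint_V]
    unfolding mp_inv_N pinv_mult_N Y_W P_def[symmetric] by simp
  hence "W * P = P * (W * P)"
    using unitary_unconj[OF V_carrier V_adjoint_V WP]
      unitary_unconj[OF V_carrier V_adjoint_V mult_carrier_mat[OF P WP]] by metis
  then obtain Y1 Y3 Y4 where "Y1 \<in> carrier_mat r r" "Y3 \<in> carrier_mat r s" "Y4 \<in> carrier_mat s s"
    and "W = four_block_mat Y1 Y3 (0\<^sub>m s r) Y4"
    using four_block_upper_triangular_if_invariant[OF W] unfolding P_def by blast
  with Y_W show ?thesis
    by blast
qed

end

theorem lemma2p3:
  fixes N U V Sigma Y :: "complex mat" and m n r :: nat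
  assumes N_carrier: "N \<in> carrier_mat m n"
    and N_rank: "vec_space.rank m N = r"
    and Sigma_carrier: "Sigma \<in> carrier_mat r r"
    and Sigma_diag: "diagonal_mat Sigma"
    and Sigma_pos: "\<forall>i<r. Sigma $$ (i, i) \<in> \<real> \<and> Re (Sigma $$ (i, i)) > 0"
    and U_unitary: "unitary_mat U m"
    and V_unitary: "unitary_mat V n"
    and svd: "N = U * four_block_mat Sigma (0\<^sub>m r (n - r)) (0\<^sub>m (m - r) r) (0\<^sub>m (m - r) (n - r))
                  * mat_adjoint V"
    and Y_carrier: "Y \<in> carrier_mat n n"
    and cond:
      "normal_mat (Y * mat_adjoint N * N)
       \<or> (\<exists>c k. c \<noteq> 0 \<and> k > 0 \<and> (Y * mat_adjoint N * N) ^\<^sub>m k = c \<cdot>\<^sub>m (mp_inv N * N))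
       \<or> (\<exists>c l k. c \<noteq> 0 \<and> l > 0 \<and> k > 0 \<and>
            (Y * mat_adjoint N * N) ^\<^sub>m k = c \<cdot>\<^sub>m ((mat_adjoint N * N) ^\<^sub>m l))
       \<or> normal_mat (F_mat N * Y)
       \<or> (\<exists>c k. c \<noteq> 0 \<and> k > 0 \<and> (F_mat N * Y) ^\<^sub>m k = c \<cdot>\<^sub>m F_mat N)
       \<or> F_mat N * Y * mp_inv N * N = 0\<^sub>m n n
       \<or> (\<exists>k>0. F_mat N * Y * (mat_adjoint N * N) ^\<^sub>m k = 0\<^sub>m n n)"
  shows "\<exists>Y1 Y3 Y4. Y1 \<in> carrier_mat r r \<and> Y3 \<in> carrier_mat r (n - r)
           \<and> Y4 \<in> carrier_mat (n - r) (n - r)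
           \<and> Y = V * four_block_mat Y1 Y3 (0\<^sub>m (n - r) r) Y4 * mat_adjoint V"
proof -
  have rn: "r + (n - r) = n" and rm: "r + (m - r) = m"
    using vec_space.rank_le_nc[OF N_carrier] vec_space.rank_le_nr[OF N_carrier] N_rank by simp_all
  obtain Sigma_inv where "Sigma_inv \<in> carrier_mat r r" "Sigma_inv * Sigma = 1\<^sub>m r" "Sigma * Sigma_inv = 1\<^sub>m r"
    using diagonal_mat_invertible[OF Sigma_carrier Sigma_diag] Sigma_pos by fastforce
  then interpret svd: svd_decomposition N U V Sigma Sigma_inv r "n - r" "m - r"
    using U_unitary V_unitary Sigma_carrier svd rn rm by unfold_locales (simp_all add: pad_mat_def)
  obtain G where "range_projector n (mp_inv N * N) (mat_adjoint N * N) G"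
    using svd.range_projector_N rn by auto
  then interpret proj: range_projector n "mp_inv N * N" "mat_adjoint N * N" G .
  have Y: "proj.sq_mat Y"
    using Y_carrier unfolding proj.sq_mat_def .
  have mp_inv_carrier: "mp_inv N \<in> carrier_mat n m"
    using svd.pinv_carrier rn rm unfolding svd.mp_inv_N by simp
  have "F_mat N = proj.F"
    unfolding F_mat_def proj.F_def using N_carrier by simp
  moreover have "Y * mat_adjoint N * N = Y * (mat_adjoint N * N)"
    using Y_carrier N_carrier by (simp add: assoc_mult_mat[of _ n n _ m _ n])
  moreover have "proj.F * Y * mp_inv N * N = proj.F * Y * (mp_inv N * N)"
    using Y proj.sq_mat_basic(4) unfolding proj.sq_mat_def
    by (intro assoc_mult_mat[OF _ mp_inv_carrier N_carrier]) auto
  ultimately have "proj.F * Y * (mp_inv N * N) = 0\<^sub>m n n"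
    using proj.FYP_zero_if_condition[OF Y] cond by simp
  then have "Y * (mp_inv N * N) = mp_inv N * N * (Y * (mp_inv N * N))"
    using proj.range_invariant_if_FYP_zero[OF Y] by blast
  then show ?thesis
    using svd.block_upper_triangular_if_invariant Y_carrier rn by simp
qed

end
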